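(* If two elements of $H$ are conjugate in $A_1(H)$, then they are conjugate in $H$.
   Context: Let $H$ be a group and $\{F_i\}_{i\in I}$ the set of all finitely generated abelian subgroups of $H$; let $C_i=C_H(F_i)$. Write $\Delta_K=\{(k,k):k\in K\}$ and $\Delta'_F=\{(f^{-1},f):f\in F\}$ in $H\times H$. $A_1(H)$ is the generalized HNN extension of $H\times H$ with stable letters $t_i$ ($i\in I$) and relations $(k,fk)=t_i(f^{-1},fk)t_i^{-1}$ for all $f\in F_i$, $k\in C_i$ (identifying $(1\times F_i)\cdot\Delta_{C_i}\cong\Delta'_{F_i}\cdot(1\times C_i)$ via $(k,fk)\mapsto(f^{-1},fk)$). $H$ is included in $A_1(H)$ via $h\mapsto(h,1)$. *)

theory Defs
  imports "HOL-Algebra.Algebra"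
begin

definition centralizer_set :: "('a, 'b) monoid_scheme \<Rightarrow> 'a set \<Rightarrow> 'a set" where
  "centralizer_set H F = {k \<in> carrier H. \<forall>f\<in>F. k \<otimes>\<^bsub>H\<^esub> f = f \<otimes>\<^bsub>H\<^esub> k}"

text \<open>The index set I: all finitely generated abelian subgroups of H
  (the subgroup itself serves as the index of its stable letter).\<close>
definition fg_abelian_subgroups :: "('a, 'b) monoid_scheme \<Rightarrow> 'a set set" where
  "fg_abelian_subgroups H =
     {F. subgroup F H \<and> (\<exists>S. finite S \<and> S \<subseteq> carrier H \<and> F = generate H S)
         \<and> (\<forall>x\<in>F. \<forall>y\<in>F. x \<otimes>\<^bsub>H\<^esub> y = y \<otimes>\<^bsub>H\<^esub> x)}"

text \<open>Letters of the presentation of A_1(H): elements of H x H, and the stable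
  letters t_F (True) and their inverses t_F^{-1} (False).\<close>
datatype 'a A1_letter = Gen "'a \<times> 'a" | Stable "'a set" bool

definition A1_wf_letter :: "('a, 'b) monoid_scheme \<Rightarrow> 'a A1_letter \<Rightarrow> bool" where
  "A1_wf_letter H l = (case l of
      Gen (a, b) \<Rightarrow> a \<in> carrier H \<and> b \<in> carrier H
    | Stable F _ \<Rightarrow> F \<in> fg_abelian_subgroups H)"

definition A1_wf_word :: "('a, 'b) monoid_scheme \<Rightarrow> 'a A1_letter list \<Rightarrow> bool" where
  "A1_wf_word H w = (\<forall>l\<in>set w. A1_wf_letter H l)"

text \<open>The congruence on words defining A_1(H) = (free monoid on the letters) / congruence:
  multiplication table of H x H, inverse relations for the stable letters, and the HNN
  relations (k, f k) = t_F (f^{-1}, f k) t_F^{-1} for f in F, k in C_H(F).\<close>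
inductive A1_eq :: "('a, 'b) monoid_scheme \<Rightarrow> 'a A1_letter list \<Rightarrow> 'a A1_letter list \<Rightarrow> bool"
  for H where
  refl: "A1_eq H w w"
| sym: "A1_eq H u w \<Longrightarrow> A1_eq H w u"
| trans: "A1_eq H u v \<Longrightarrow> A1_eq H v w \<Longrightarrow> A1_eq H u w"
| cong: "A1_eq H u w \<Longrightarrow> A1_eq H (x @ u @ y) (x @ w @ y)"
| unit: "A1_eq H [Gen (\<one>\<^bsub>H\<^esub>, \<one>\<^bsub>H\<^esub>)] []"
| mult: "\<lbrakk>a \<in> carrier H; b \<in> carrier H; c \<in> carrier H; d \<in> carrier H\<rbrakk> \<Longrightarrow>
     A1_eq H [Gen (a, b), Gen (c, d)] [Gen (a \<otimes>\<^bsub>H\<^esub> c, b \<otimes>\<^bsub>H\<^esub> d)]"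
| stable_inv: "F \<in> fg_abelian_subgroups H \<Longrightarrow> A1_eq H [Stable F e, Stable F (\<not> e)] []"
| hnn: "\<lbrakk>F \<in> fg_abelian_subgroups H; f \<in> F; k \<in> centralizer_set H F\<rbrakk> \<Longrightarrow>
     A1_eq H [Gen (k, f \<otimes>\<^bsub>H\<^esub> k)]
             [Stable F True, Gen (inv\<^bsub>H\<^esub> f, f \<otimes>\<^bsub>H\<^esub> k), Stable F False]"

definition A1_incl :: "('a, 'b) monoid_scheme \<Rightarrow> 'a \<Rightarrow> 'a A1_letter list" where
  "A1_incl H h = [Gen (h, \<one>\<^bsub>H\<^esub>)]"

text \<open>Conjugacy in A_1(H): there is an element x (class of w) with inverse (class of w')
  such that x g x^{-1} = h.\<close>
definition A1_conjugate :: "('a, 'b) monoid_scheme \<Rightarrow> 'a A1_letter list \<Rightarrow> 'a A1_letter list \<Rightarrow> bool" where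
  "A1_conjugate H u v = (\<exists>w w'. A1_wf_word H w \<and> A1_wf_word H w' \<and>
      A1_eq H (w @ w') [] \<and> A1_eq H (w @ u @ w') v)"

end

theory Submission
  imports Defs
begin

(* A_1(H) is an HNN extension of the base group G = H x H with one stable letter t_F for every
   (finitely generated) abelian subgroup F of H, conjugating the associated subgroup
   A_F = {(k, f k)} onto B_F = {(f^-1, f k)} (f in F, k in C_H(F)).  The proof avoids the
   general theory of HNN extensions by the van der Waerden trick: we let the defining words of
   A_1(H) act on reduced (Britton) normal forms c_1 t_1 ... c_n t_n b, check that the defining
   relations act trivially, and read off conjugacy from a fixed point of the action. *)

context group
begin

lemma inv_cancel_left [simp]: "x \<in> carrier G \<Longrightarrow> y \<in> carrier G \<Longrightarrow> inv x \<otimes> (x \<otimes> y) = y"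
  and cancel_inv_left [simp]: "x \<in> carrier G \<Longrightarrow> y \<in> carrier G \<Longrightarrow> x \<otimes> (inv x \<otimes> y) = y"
  by (simp_all add: m_assoc[symmetric])

lemma commute_inv:
  assumes "x \<in> carrier G" "y \<in> carrier G" "x \<otimes> y = y \<otimes> x"
  shows "inv x \<otimes> y = y \<otimes> inv x"
proof -
  have "inv x \<otimes> y = inv x \<otimes> (y \<otimes> x) \<otimes> inv x" using assms(1,2) by (simp add: m_assoc)
  also have "\<dots> = inv x \<otimes> (x \<otimes> y) \<otimes> inv x" using assms(3) by simp
  also have "\<dots> = y \<otimes> inv x" using assms(1,2) by (simp add: m_assoc)
  finally show ?thesis .
qed

lemma centralizer_set_subgroup:
  assumes F: "F \<subseteq> carrier G"
  shows "subgroup (centralizer_set G F) G"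
proof (rule subgroupI)
  have "\<one> \<in> centralizer_set G F" using F by (auto simp: centralizer_set_def)
  then show "centralizer_set G F \<noteq> {}" by blast
  fix k k' assume k: "k \<in> centralizer_set G F" and k': "k' \<in> centralizer_set G F"
  then show "inv k \<in> centralizer_set G F"
    using F commute_inv by (auto simp: centralizer_set_def)
  have "k \<otimes> k' \<otimes> f = f \<otimes> (k \<otimes> k')" if f: "f \<in> F" for f
  proof -
    have "k \<otimes> k' \<otimes> f = k \<otimes> (f \<otimes> k')" using k k' f F by (auto simp: centralizer_set_def m_assoc)
    also have "\<dots> = f \<otimes> (k \<otimes> k')" using k k' f F by (auto simp: centralizer_set_def m_assoc[symmetric])
    finally show ?thesis .
  qed
  then show "k \<otimes> k' \<in> centralizer_set G F" using k k' by (auto simp: centralizer_set_def)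
qed (auto simp: centralizer_set_def)

lemma centralizer_set_commute: "k \<in> centralizer_set G F \<Longrightarrow> f \<in> F \<Longrightarrow> k \<otimes> f = f \<otimes> k"
  by (simp add: centralizer_set_def)

lemma conjugate_trans:
  assumes "x \<in> carrier G" "z \<in> carrier G" "b \<in> carrier G" "g \<in> carrier G"
    and "x \<otimes> z \<otimes> inv x = h" and "z \<otimes> b = b \<otimes> g"
  shows "(x \<otimes> b) \<otimes> g \<otimes> inv (x \<otimes> b) = h"
proof -
  have "(x \<otimes> b) \<otimes> g \<otimes> inv (x \<otimes> b) = x \<otimes> (b \<otimes> g) \<otimes> inv b \<otimes> inv x"
    using assms(1-4) by (simp add: m_assoc inv_mult_group)
  also have "\<dots> = x \<otimes> z \<otimes> inv x"
    using assms(1-4) by (simp add: assms(6)[symmetric] m_assoc)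
  finally show ?thesis using assms(5) by simp
qed

lemma fg_abelian_subgroupD:
  assumes "F \<in> fg_abelian_subgroups G"
  shows "subgroup F G" and "x \<in> F \<Longrightarrow> y \<in> F \<Longrightarrow> x \<otimes> y = y \<otimes> x"
  using assms by (auto simp: fg_abelian_subgroups_def)

end

text \<open>The stable letter \<open>t\<^sub>i\<close> is meant to satisfy
  \<open>a = t\<^sub>i (iso i a) t\<^sub>i\<^sup>-\<^sup>1\<close> for \<open>a \<in> S i\<close>, and \<open>t\<^bsub>opp i\<^esub> = t\<^sub>i\<^sup>-\<^sup>1\<close>.\<close>

locale hnn_ext = group G for G (structure) +
  fixes edge :: "'i \<Rightarrow> bool" and opp :: "'i \<Rightarrow> 'i"
    and S :: "'i \<Rightarrow> 'a set" and iso :: "'i \<Rightarrow> 'a \<Rightarrow> 'a"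
  assumes edge_opp: "edge i \<Longrightarrow> edge (opp i)"
    and opp_opp [simp]: "opp (opp i) = i"
    and S_subgroup: "edge i \<Longrightarrow> subgroup (S i) G"
    and iso_mem: "edge i \<Longrightarrow> a \<in> S i \<Longrightarrow> iso i a \<in> S (opp i)"
    and iso_opp: "edge i \<Longrightarrow> a \<in> S i \<Longrightarrow> iso (opp i) (iso i a) = a"
    and iso_mult: "edge i \<Longrightarrow> a \<in> S i \<Longrightarrow> a' \<in> S i \<Longrightarrow> iso i (a \<otimes> a') = iso i a \<otimes> iso i a'"
begin

lemma S_carrier: "edge i \<Longrightarrow> a \<in> S i \<Longrightarrow> a \<in> carrier G"
  by (rule subgroup.mem_carrier[OF S_subgroup])

lemma iso_carrier: "edge i \<Longrightarrow> a \<in> S i \<Longrightarrow> iso i a \<in> carrier G"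
  by (rule S_carrier[OF edge_opp iso_mem])

lemma one_in_S: "edge i \<Longrightarrow> \<one> \<in> S i"
  by (rule subgroup.one_closed[OF S_subgroup])

lemma iso_one:
  assumes i: "edge i" shows "iso i \<one> = \<one>"
proof -
  have "iso i \<one> \<otimes> iso i \<one> = iso i \<one>"
    using iso_mult[OF i one_in_S[OF i] one_in_S[OF i]] by simp
  then show ?thesis using iso_carrier[OF i one_in_S[OF i]] by (simp add: l_cancel_one')
qed

lemma left_mult_S_iff:
  assumes "edge i" "y \<in> S i" "c \<in> carrier G"
  shows "y \<otimes> c \<in> S i \<longleftrightarrow> c \<in> S i"
proof
  assume "y \<otimes> c \<in> S i"
  then have "inv y \<otimes> (y \<otimes> c) \<in> S i"
    using S_subgroup[OF assms(1)] assms(2) by (simp add: subgroup.m_closed subgroup.m_inv_closed)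
  then show "c \<in> S i" using assms(3) S_carrier[OF assms(1,2)] by (simp add: m_assoc[symmetric])
next
  assume "c \<in> S i"
  then show "y \<otimes> c \<in> S i" using S_subgroup[OF assms(1)] assms(2) by (simp add: subgroup.m_closed)
qed

definition rep :: "'i \<Rightarrow> 'a \<Rightarrow> 'a" where
  "rep i d = (if d \<in> S i then \<one> else (SOME c. c \<in> d <#\<^bsub>G\<^esub> S i))"

lemma rep_in_coset:
  assumes i: "edge i" and d: "d \<in> carrier G"
  shows "rep i d \<in> d <#\<^bsub>G\<^esub> S i"
proof (cases "d \<in> S i")
  case True
  have "inv d \<otimes> \<one> \<in> S i"
    using True d S_subgroup[OF i] by (simp add: subgroup.m_inv_closed)
  then have "\<one> \<in> d <#\<^bsub>G\<^esub> S i"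
    using d subgroup.lcos_module_rev[OF S_subgroup[OF i] is_group] by blast
  then show ?thesis using True by (simp add: rep_def)
next
  case False
  then show ?thesis
    using someI[where P = "\<lambda>c. c \<in> d <#\<^bsub>G\<^esub> S i", OF lcos_self[OF d S_subgroup[OF i]]]
    by (simp add: rep_def)
qed

lemma rep_carrier: "edge i \<Longrightarrow> d \<in> carrier G \<Longrightarrow> rep i d \<in> carrier G"
  using rep_in_coset l_coset_subset_G[OF subgroup.subset[OF S_subgroup]] by blast

lemma rep_quotient_in_S:
  assumes i: "edge i" and d: "d \<in> carrier G"
  shows "inv (rep i d) \<otimes> d \<in> S i"
proof -
  have "inv d \<otimes> rep i d \<in> S i"
    using subgroup.lcos_module_imp[OF S_subgroup[OF i] is_group d rep_in_coset[OF i d]] .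
  then have "inv (inv d \<otimes> rep i d) \<in> S i"
    using S_subgroup[OF i] by (simp add: subgroup.m_inv_closed)
  then show ?thesis using d rep_carrier[OF i d] by (simp add: inv_mult_group)
qed

lemma rep_right_mult:
  assumes i: "edge i" and d: "d \<in> carrier G" and s: "s \<in> S i"
  shows "rep i (d \<otimes> s) = rep i d"
proof -
  have sc: "s \<in> carrier G" using S_carrier[OF i s] .
  have mem: "d \<otimes> s \<in> S i \<longleftrightarrow> d \<in> S i"
  proof
    assume "d \<otimes> s \<in> S i"
    then have "d \<otimes> s \<otimes> inv s \<in> S i"
      using S_subgroup[OF i] s by (simp add: subgroup.m_closed subgroup.m_inv_closed)
    then show "d \<in> S i" using d sc by (simp add: m_assoc)
  next
    assume "d \<in> S i"
    then show "d \<otimes> s \<in> S i" using S_subgroup[OF i] s by (simp add: subgroup.m_closed)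
  qed
  have coset: "(d \<otimes> s) <#\<^bsub>G\<^esub> S i = d <#\<^bsub>G\<^esub> S i"
    using lcos_m_assoc[OF subgroup.subset[OF S_subgroup[OF i]] d sc]
      coset_join3[OF sc S_subgroup[OF i] s] by simp
  show ?thesis unfolding rep_def mem coset ..
qed

lemma rep_eq_one_iff:
  assumes i: "edge i" and d: "d \<in> carrier G"
  shows "rep i d = \<one> \<longleftrightarrow> d \<in> S i"
proof
  assume "rep i d = \<one>"
  then show "d \<in> S i" using rep_quotient_in_S[OF i d] d by simp
qed (simp add: rep_def)

lemma rep_idem:
  assumes i: "edge i" and d: "d \<in> carrier G"
  shows "rep i (rep i d) = rep i d"
proof -
  have "rep i d \<otimes> (inv (rep i d) \<otimes> d) = d"
    using d rep_carrier[OF i d] by (simp add: m_assoc[symmetric])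
  then show ?thesis
    using rep_right_mult[OF i rep_carrier[OF i d] rep_quotient_in_S[OF i d]] by simp
qed

text \<open>A state \<open>([(c\<^sub>1, i\<^sub>1), \<dots>, (c\<^sub>n, i\<^sub>n)], b)\<close> stands for \<open>c\<^sub>1 t\<^sub>1 \<dots> c\<^sub>n t\<^sub>n b\<close>.\<close>

fun no_pinch :: "'i \<Rightarrow> ('a \<times> 'i) list \<Rightarrow> bool" where
  "no_pinch i [] = True"
| "no_pinch i ((c, j) # _) = (c \<noteq> \<one> \<or> j \<noteq> opp i)"

fun reduced :: "('a \<times> 'i) list \<Rightarrow> bool" where
  "reduced [] = True"
| "reduced ((c, i) # r) = (edge i \<and> c \<in> carrier G \<and> rep i c = c \<and> no_pinch i r \<and> reduced r)"

definition normal :: "('a \<times> 'i) list \<times> 'a \<Rightarrow> bool" where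
  "normal p = (reduced (fst p) \<and> snd p \<in> carrier G)"

text \<open>Left multiplication of a normal form by a base element \<open>x\<close>: rewrite \<open>x c\<^sub>1 = c\<^sub>1\<acute> a\<close>
  with \<open>a \<in> S i\<^sub>1\<close>, move \<open>a\<close> past \<open>t\<^sub>1\<close> as \<open>iso i\<^sub>1 a\<close>, and continue.\<close>

fun mult_base :: "'a \<Rightarrow> ('a \<times> 'i) list \<times> 'a \<Rightarrow> ('a \<times> 'i) list \<times> 'a" where
  "mult_base x ([], b) = ([], x \<otimes> b)"
| "mult_base x ((c, i) # r, b) =
     (let c' = rep i (x \<otimes> c); q = mult_base (iso i (inv c' \<otimes> (x \<otimes> c))) (r, b)
      in ((c', i) # fst q, snd q))"

fun mult_stable :: "'i \<Rightarrow> ('a \<times> 'i) list \<times> 'a \<Rightarrow> ('a \<times> 'i) list \<times> 'a" where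
  "mult_stable j ([], b) = ([(\<one>, j)], b)"
| "mult_stable j ((c, i) # r, b) =
     (if c = \<one> \<and> i = opp j then (r, b) else ((\<one>, j) # (c, i) # r, b))"

definition shift :: "'a \<Rightarrow> ('a \<times> 'i) list \<times> 'a \<Rightarrow> ('a \<times> 'i) list \<times> 'a" where
  "shift z p = (fst p, snd p \<otimes> z)"

text \<open>Multiplying by an element of \<open>S (opp i)\<close> cannot create a pinch behind \<open>t\<^sub>i\<close>,
  because a non-trivial coset representative stays outside the subgroup.\<close>

lemma no_pinch_mult_base:
  assumes y: "y \<in> S (opp i)" and r: "reduced r" "no_pinch i r"
  shows "no_pinch i (fst (mult_base y (r, b)))"
proof (cases r)
  case (Cons ci2 r2)
  obtain c2 i2 where ci2: "ci2 = (c2, i2)" by fastforce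
  have i2: "edge i2" and c2: "c2 \<in> carrier G" "rep i2 c2 = c2"
    using r Cons ci2 by auto
  have "rep i2 (y \<otimes> c2) \<noteq> \<one>" if i2_opp: "i2 = opp i"
  proof
    assume "rep i2 (y \<otimes> c2) = \<one>"
    moreover have yc: "y \<in> carrier G" using S_carrier[OF i2] y i2_opp by simp
    ultimately have "c2 \<in> S i2"
      using rep_eq_one_iff[OF i2] left_mult_S_iff[OF i2 _ c2(1)] y i2_opp c2 by simp
    then have "c2 = \<one>" using rep_eq_one_iff[OF i2 c2(1)] c2(2) by simp
    then show False using r(2) Cons ci2 i2_opp by simp
  qed
  then show ?thesis using Cons ci2 by (auto simp: Let_def)
qed simp

lemma mult_base_normal:
  "normal p \<Longrightarrow> x \<in> carrier G \<Longrightarrow> normal (mult_base x p)"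
proof (induction x p rule: mult_base.induct)
  case (2 x c i r b)
  let ?d = "x \<otimes> c"
  let ?y = "iso i (inv (rep i ?d) \<otimes> ?d)"
  have i: "edge i" and r: "reduced r" "no_pinch i r" and d: "?d \<in> carrier G"
    using "2.prems" by (auto simp: normal_def)
  have yS: "?y \<in> S (opp i)" using iso_mem[OF i rep_quotient_in_S[OF i d]] .
  have "normal (mult_base ?y (r, b))"
    using "2.IH"[OF HOL.refl] "2.prems" r S_carrier[OF edge_opp[OF i] yS] by (simp add: normal_def)
  then show ?case
    using no_pinch_mult_base[OF yS r] i rep_carrier[OF i d] rep_idem[OF i d]
    by (simp add: normal_def Let_def)
qed (simp add: normal_def)

lemma mult_base_one: "normal p \<Longrightarrow> mult_base \<one> p = p"
proof (induction "\<one>::'a" p rule: mult_base.induct)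
  case (2 c i r b)
  then show ?case
    using rep_eq_one_iff iso_one by (simp add: normal_def Let_def)
qed (simp add: normal_def)

lemma mult_base_shift:
  "normal p \<Longrightarrow> x \<in> carrier G \<Longrightarrow> z \<in> carrier G \<Longrightarrow>
    mult_base x (shift z p) = shift z (mult_base x p)"
proof (induction x p rule: mult_base.induct)
  case (1 x b)
  then show ?case by (simp add: shift_def normal_def m_assoc)
next
  case (2 x c i r b)
  have i: "edge i" and d: "x \<otimes> c \<in> carrier G" and "normal (r, b)"
    using "2.prems" by (auto simp: normal_def)
  then show ?case
    using "2.IH"[OF HOL.refl] "2.prems"(3) iso_carrier[OF i rep_quotient_in_S[OF i d]]
    by (simp add: shift_def Let_def)
qed

lemma mult_base_mult:
  assumes "normal p" "x \<in> carrier G" "y \<in> carrier G"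
  shows "mult_base x (mult_base y p) = mult_base (x \<otimes> y) p"
  using assms
proof (induction y p arbitrary: x rule: mult_base.induct)
  case (1 y b)
  then show ?case by (simp add: normal_def m_assoc)
next
  case (2 y c i r b)
  have i: "edge i" and c: "c \<in> carrier G" and rb: "normal (r, b)"
    using "2.prems" by (auto simp: normal_def)
  \<comment> \<open>Moving \<open>y\<close> past \<open>c t\<^sub>i\<close> leaves the representative \<open>c\<^sub>1\<close> and the carry \<open>a\<^sub>1\<close>;
      moving \<open>x\<close> past \<open>c\<^sub>1 t\<^sub>i\<close> leaves \<open>c\<^sub>2\<close> and \<open>a\<^sub>2\<close>.  Then \<open>x \<otimes> y \<otimes> c = c\<^sub>2 \<otimes> a\<^sub>2 \<otimes> a\<^sub>1\<close>.\<close>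
  define c1 where "c1 = rep i (y \<otimes> c)"
  define a1 where "a1 = inv c1 \<otimes> (y \<otimes> c)"
  define c2 where "c2 = rep i (x \<otimes> c1)"
  define a2 where "a2 = inv c2 \<otimes> (x \<otimes> c1)"
  have c1: "c1 \<in> carrier G" and a1: "a1 \<in> S i"
    using rep_carrier[OF i] rep_quotient_in_S[OF i] c "2.prems"(3) by (simp_all add: c1_def a1_def)
  have c2: "c2 \<in> carrier G" and a2: "a2 \<in> S i"
    using rep_carrier[OF i] rep_quotient_in_S[OF i] c1 "2.prems"(2) by (simp_all add: c2_def a2_def)
  have a1c: "a1 \<in> carrier G" and a2c: "a2 \<in> carrier G" using S_carrier[OF i] a1 a2 by auto
  have xyc: "x \<otimes> y \<otimes> c = (x \<otimes> c1) \<otimes> a1"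
    using c1 c "2.prems"(2,3) by (simp add: a1_def m_assoc)
  have rep_xyc: "rep i (x \<otimes> y \<otimes> c) = c2"
    using xyc rep_right_mult[OF i _ a1] c1 "2.prems"(2) by (simp add: c2_def)
  have carry_xyc: "inv c2 \<otimes> (x \<otimes> y \<otimes> c) = a2 \<otimes> a1"
    using xyc c1 c2 a1c "2.prems"(2) by (simp add: a2_def m_assoc)
  have IH: "mult_base (iso i a2) (mult_base (iso i a1) (r, b)) = mult_base (iso i a2 \<otimes> iso i a1) (r, b)"
    using "2.IH"[OF HOL.refl rb] iso_carrier[OF i] a1 a2 by (simp add: c1_def a1_def)
  show ?case
    using IH rep_xyc carry_xyc iso_mult[OF i a2 a1]
    by (simp add: Let_def c1_def[symmetric] a1_def[symmetric] c2_def[symmetric] a2_def[symmetric])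
qed

lemma mult_stable_no_pinch: "no_pinch j L \<Longrightarrow> mult_stable j (L, b) = ((\<one>, j) # L, b)"
  by (cases L) auto

lemma mult_stable_normal: "edge j \<Longrightarrow> normal p \<Longrightarrow> normal (mult_stable j p)"
  by (cases p; cases "fst p") (auto simp: normal_def rep_def one_in_S)

lemma mult_stable_opp: "normal p \<Longrightarrow> mult_stable j (mult_stable (opp j) p) = p"
  by (cases p; cases "fst p") (auto simp: normal_def mult_stable_no_pinch)

lemma mult_stable_shift: "mult_stable j (shift z p) = shift z (mult_stable j p)"
  by (cases p; cases "fst p") (auto simp: shift_def)

lemma mult_base_S_head:
  assumes i: "edge i" and a: "a \<in> S i"
  shows "mult_base a ((\<one>, i) # r, b) = ((\<one>, i) # fst (mult_base (iso i a) (r, b)), snd (mult_base (iso i a) (r, b)))"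
proof -
  have "rep i a = \<one>" using a rep_eq_one_iff[OF i S_carrier[OF i a]] by simp
  then show ?thesis using S_carrier[OF i a] by (simp add: Let_def)
qed

lemma stable_conjugation:
  assumes j: "edge j" and a: "a \<in> S j" and p: "normal (L, b)"
  shows "mult_base a (L, b) = mult_stable j (mult_base (iso j a) (mult_stable (opp j) (L, b)))"
proof (cases "\<exists>r. L = (\<one>, j) # r")
  case True
  then obtain r where r: "L = (\<one>, j) # r" by blast
  have "reduced r" "no_pinch j r" using p r by (auto simp: normal_def)
  then have "no_pinch j (fst (mult_base (iso j a) (r, b)))"
    using no_pinch_mult_base[OF iso_mem[OF j a]] by blast
  then have "mult_stable j (mult_base (iso j a) (r, b)) =
      ((\<one>, j) # fst (mult_base (iso j a) (r, b)), snd (mult_base (iso j a) (r, b)))"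
    using mult_stable_no_pinch by (metis prod.collapse)
  then show ?thesis using r mult_base_S_head[OF j a] by (simp del: mult_base.simps)
next
  case False
  then have "no_pinch (opp j) L" by (cases L) auto
  then show ?thesis
    using mult_stable_no_pinch mult_base_S_head[OF edge_opp[OF j] iso_mem[OF j a]] iso_opp[OF j a]
    by simp
qed

text \<open>Key lemma: if \<open>x\<close> maps the normal form \<open>(L, b)\<close> to \<open>(L, b y)\<close>, then walking along
  \<open>L\<close> the element \<open>x\<close> is transformed by conjugations in \<open>G\<close> and by the isomorphisms into
  some \<open>x'\<close> with \<open>x' b = b y\<close>.\<close>

lemma fixed_point_conjugate:
  assumes Q_conj: "\<And>z c. Q z \<Longrightarrow> z \<in> carrier G \<Longrightarrow> c \<in> carrier G \<Longrightarrow> Q (inv c \<otimes> z \<otimes> c)"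
    and Q_iso: "\<And>z i. Q z \<Longrightarrow> edge i \<Longrightarrow> z \<in> S i \<Longrightarrow> Q (iso i z)"
  shows "normal (L, b) \<Longrightarrow> x \<in> carrier G \<Longrightarrow> Q x \<Longrightarrow> mult_base x (L, b) = (L, b \<otimes> y) \<Longrightarrow>
    \<exists>x'\<in>carrier G. Q x' \<and> x' \<otimes> b = b \<otimes> y"
proof (induction L arbitrary: x)
  case (Cons ci r)
  obtain c i where ci: "ci = (c, i)" by fastforce
  have i: "edge i" and c: "c \<in> carrier G" and rb: "normal (r, b)"
    using Cons.prems(1) ci by (auto simp: normal_def)
  let ?a = "inv c \<otimes> (x \<otimes> c)"
  have rep: "rep i (x \<otimes> c) = c" and rest: "mult_base (iso i ?a) (r, b) = (r, b \<otimes> y)"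
    using Cons.prems(4) ci by (auto simp: Let_def prod_eq_iff)
  have aS: "?a \<in> S i" using rep_quotient_in_S[OF i, of "x \<otimes> c"] rep c Cons.prems(2) by simp
  have "Q ?a" using Q_conj[OF Cons.prems(3,2) c] c Cons.prems(2) by (simp add: m_assoc)
  then have "Q (iso i ?a)" using Q_iso i aS by blast
  then show ?case using Cons.IH[OF rb iso_carrier[OF i aS] _ rest] by blast
qed auto

end

text \<open>\<open>A\<^sub>1(H)\<close> as an HNN system over \<open>H \<times>\<times> H\<close>: the index \<open>(F, True)\<close> is the letter \<open>t\<^sub>F\<close>
  and \<open>(F, False)\<close> its inverse.  Elements of the associated subgroups are parametrised by
  \<open>(f, k) \<in> F \<times> C\<^sub>H(F)\<close>: \<open>(k, f k)\<close> for \<open>t\<^sub>F\<close> and \<open>(f\<^sup>-\<^sup>1, f k)\<close> for \<open>t\<^sub>F\<^sup>-\<^sup>1\<close>; the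
  isomorphism swaps the two parametrisations.\<close>

type_synonym 'a A1_state = "(('a \<times> 'a) \<times> ('a set \<times> bool)) list \<times> ('a \<times> 'a)"

locale A1_hnn = group H for H (structure)
begin

fun A1_edge :: "'a set \<times> bool \<Rightarrow> bool" where
  "A1_edge (F, e) = (F \<in> fg_abelian_subgroups H)"

fun A1_opp :: "'a set \<times> bool \<Rightarrow> 'a set \<times> bool" where
  "A1_opp (F, e) = (F, \<not> e)"

fun assoc_elt :: "bool \<Rightarrow> 'a \<times> 'a \<Rightarrow> 'a \<times> 'a" where
  "assoc_elt True (f, k) = (k, f \<otimes> k)"
| "assoc_elt False (f, k) = (inv f, f \<otimes> k)"

fun A1_S :: "'a set \<times> bool \<Rightarrow> ('a \<times> 'a) set" where
  "A1_S (F, e) = assoc_elt e ` (F \<times> centralizer_set H F)"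

fun A1_iso :: "'a set \<times> bool \<Rightarrow> 'a \<times> 'a \<Rightarrow> 'a \<times> 'a" where
  "A1_iso (F, True) (a, b) = (a \<otimes> inv b, b)"
| "A1_iso (F, False) (a, b) = (a \<otimes> b, b)"

lemma HH_group: "group (H \<times>\<times> H)"
  by (rule DirProd_group[OF is_group is_group])

text \<open>Algebra of the associated subgroups for a fixed abelian subgroup \<open>F\<close>; the parametrisation
  \<open>assoc_elt e\<close> is a homomorphism on \<open>F \<times> C\<^sub>H(F)\<close> because \<open>F\<close> is abelian and centralised by \<open>C\<^sub>H(F)\<close>.\<close>

context
  fixes F assumes F: "F \<in> fg_abelian_subgroups H"
begin

lemma F_subgroup: "subgroup F H" and F_comm: "x \<in> F \<Longrightarrow> y \<in> F \<Longrightarrow> x \<otimes> y = y \<otimes> x"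
  using fg_abelian_subgroupD[OF F] by auto

lemma C_subgroup: "subgroup (centralizer_set H F) H"
  by (rule centralizer_set_subgroup[OF subgroup.subset[OF F_subgroup]])

lemma assoc_elt_carrier:
  "f \<in> F \<Longrightarrow> k \<in> centralizer_set H F \<Longrightarrow> assoc_elt e (f, k) \<in> carrier (H \<times>\<times> H)"
  using subgroup.mem_carrier[OF F_subgroup] subgroup.mem_carrier[OF C_subgroup] by (cases e) auto

lemma assoc_elt_mult:
  assumes f: "f \<in> F" "f' \<in> F" and k: "k \<in> centralizer_set H F" "k' \<in> centralizer_set H F"
  shows "assoc_elt e (f, k) \<otimes>\<^bsub>H \<times>\<times> H\<^esub> assoc_elt e (f', k') = assoc_elt e (f \<otimes> f', k \<otimes> k')"
proof -
  have c: "f \<in> carrier H" "f' \<in> carrier H" "k \<in> carrier H" "k' \<in> carrier H"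
    using f k subgroup.mem_carrier[OF F_subgroup] subgroup.mem_carrier[OF C_subgroup] by auto
  have "f \<otimes> k \<otimes> (f' \<otimes> k') = f \<otimes> (k \<otimes> f') \<otimes> k'" using c by (simp add: m_assoc)
  also have "\<dots> = f \<otimes> f' \<otimes> (k \<otimes> k')"
    using centralizer_set_commute[OF k(1) f(2)] c by (simp add: m_assoc)
  finally have snd_eq: "f \<otimes> k \<otimes> (f' \<otimes> k') = f \<otimes> f' \<otimes> (k \<otimes> k')" .
  have "inv f \<otimes> inv f' = inv (f \<otimes> f')"
    using F_comm[OF f] c by (simp add: inv_mult_group)
  then show ?thesis using snd_eq by (cases e) simp_all
qed

lemma assoc_elt_inv:
  assumes f: "f \<in> F" and k: "k \<in> centralizer_set H F"
  shows "inv\<^bsub>H \<times>\<times> H\<^esub> assoc_elt e (f, k) = assoc_elt e (inv f, inv k)"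
proof -
  have c: "f \<in> carrier H" "k \<in> carrier H"
    using f k subgroup.mem_carrier[OF F_subgroup] subgroup.mem_carrier[OF C_subgroup] by auto
  have "inv (f \<otimes> k) = inv (k \<otimes> f)" using centralizer_set_commute[OF k f] by simp
  then have "inv (f \<otimes> k) = inv f \<otimes> inv k" using c by (simp add: inv_mult_group)
  then show ?thesis using c by (cases e) (simp_all add: inv_DirProd[OF is_group is_group])
qed

lemma A1_iso_assoc_elt:
  "f \<in> F \<Longrightarrow> k \<in> centralizer_set H F \<Longrightarrow> A1_iso (F, e) (assoc_elt e (f, k)) = assoc_elt (\<not> e) (f, k)"
  using subgroup.mem_carrier[OF F_subgroup] subgroup.mem_carrier[OF C_subgroup]
  by (cases e) (simp_all add: inv_mult_group m_assoc)

lemma A1_S_subgroup: "subgroup (A1_S (F, e)) (H \<times>\<times> H)"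
proof (rule group.subgroupI[OF HH_group])
  show "A1_S (F, e) \<subseteq> carrier (H \<times>\<times> H)"
    using assoc_elt_carrier by (auto simp del: carrier_DirProd)
  show "A1_S (F, e) \<noteq> {}"
    using subgroup.one_closed[OF F_subgroup] subgroup.one_closed[OF C_subgroup] by auto
next
  fix a assume "a \<in> A1_S (F, e)"
  then obtain f k where fk: "f \<in> F" "k \<in> centralizer_set H F" and a: "a = assoc_elt e (f, k)"
    by auto
  have "assoc_elt e (inv f, inv k) \<in> A1_S (F, e)"
    using subgroup.m_inv_closed[OF F_subgroup fk(1)] subgroup.m_inv_closed[OF C_subgroup fk(2)] by simp
  then show "inv\<^bsub>H \<times>\<times> H\<^esub> a \<in> A1_S (F, e)" using a assoc_elt_inv[OF fk] by simp
next
  fix a b assume "a \<in> A1_S (F, e)" "b \<in> A1_S (F, e)"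
  then obtain f k f' k' where fk: "f \<in> F" "k \<in> centralizer_set H F" "f' \<in> F" "k' \<in> centralizer_set H F"
    and ab: "a = assoc_elt e (f, k)" "b = assoc_elt e (f', k')"
    by auto
  have "assoc_elt e (f \<otimes> f', k \<otimes> k') \<in> A1_S (F, e)"
    using subgroup.m_closed[OF F_subgroup fk(1,3)] subgroup.m_closed[OF C_subgroup fk(2,4)] by simp
  then show "a \<otimes>\<^bsub>H \<times>\<times> H\<^esub> b \<in> A1_S (F, e)" using ab assoc_elt_mult fk by simp
qed

end

lemma A1_hnn_ext: "hnn_ext (H \<times>\<times> H) A1_edge A1_opp A1_S A1_iso"
proof (intro hnn_ext.intro hnn_ext_axioms.intro HH_group)
  fix i
  show "A1_edge i \<Longrightarrow> A1_edge (A1_opp i)" "A1_opp (A1_opp i) = i"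
    by (cases i; simp)+
  show "A1_edge i \<Longrightarrow> subgroup (A1_S i) (H \<times>\<times> H)"
    using A1_S_subgroup by (cases i) (simp del: A1_S.simps)
next
  fix i a assume i: "A1_edge i" and a: "a \<in> A1_S i"
  obtain F e where Fe: "i = (F, e)" by fastforce
  have F: "F \<in> fg_abelian_subgroups H" using i Fe by simp
  obtain f k where fk: "f \<in> F" "k \<in> centralizer_set H F" and a_eq: "a = assoc_elt e (f, k)"
    using a Fe by auto
  show "A1_iso i a \<in> A1_S (A1_opp i)"
    using A1_iso_assoc_elt[OF F fk] fk Fe a_eq by simp
  show "A1_iso (A1_opp i) (A1_iso i a) = a"
    using A1_iso_assoc_elt[OF F fk] A1_iso_assoc_elt[OF F fk, of "\<not> e"] Fe a_eq by simp
  fix a' assume "a' \<in> A1_S i"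
  then obtain f' k' where fk': "f' \<in> F" "k' \<in> centralizer_set H F" and a'_eq: "a' = assoc_elt e (f', k')"
    using Fe by auto
  have ff: "f \<otimes> f' \<in> F" and kk: "k \<otimes> k' \<in> centralizer_set H F"
    using subgroup.m_closed[OF F_subgroup[OF F] fk(1) fk'(1)]
      subgroup.m_closed[OF C_subgroup[OF F] fk(2) fk'(2)] by auto
  show "A1_iso i (a \<otimes>\<^bsub>H \<times>\<times> H\<^esub> a') = A1_iso i a \<otimes>\<^bsub>H \<times>\<times> H\<^esub> A1_iso i a'"
    using assoc_elt_mult[OF F fk(1) fk'(1) fk(2) fk'(2)] A1_iso_assoc_elt[OF F ff kk]
      A1_iso_assoc_elt[OF F fk] A1_iso_assoc_elt[OF F fk'] Fe a_eq a'_eq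
      assoc_elt_mult[OF F fk(1) fk'(1) fk(2) fk'(2), of "\<not> e"]
    by simp
qed

end

sublocale A1_hnn \<subseteq> N: hnn_ext "H \<times>\<times> H" A1_edge A1_opp A1_S A1_iso
  by (rule A1_hnn_ext)

context A1_hnn
begin

text \<open>The action of words in the generators of \<open>A\<^sub>1(H)\<close> on states; ill-formed letters act
  trivially (they never occur in the relevant words).\<close>

definition letter_act :: "'a A1_letter \<Rightarrow> 'a A1_state \<Rightarrow> 'a A1_state" where
  "letter_act l p = (case l of
      Gen ab \<Rightarrow> if ab \<in> carrier (H \<times>\<times> H) then N.mult_base ab p else p
    | Stable F e \<Rightarrow> if F \<in> fg_abelian_subgroups H then N.mult_stable (F, e) p else p)"

definition word_act :: "'a A1_letter list \<Rightarrow> 'a A1_state \<Rightarrow> 'a A1_state" where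
  "word_act w p = foldr letter_act w p"

lemma word_act_simps [simp]:
  "word_act [] p = p"
  "word_act (l # w) p = letter_act l (word_act w p)"
  "word_act (u @ v) p = word_act u (word_act v p)"
  by (simp_all add: word_act_def)

lemma letter_act_normal: "N.normal p \<Longrightarrow> N.normal (letter_act l p)"
  by (cases l) (simp_all add: letter_act_def N.mult_base_normal N.mult_stable_normal del: carrier_DirProd)

lemma word_act_normal: "N.normal p \<Longrightarrow> N.normal (word_act w p)"
  by (induction w) (simp_all add: letter_act_normal)

lemma word_act_shift:
  assumes "N.normal p" "z \<in> carrier (H \<times>\<times> H)"
  shows "word_act w (N.shift z p) = N.shift z (word_act w p)"
proof (induction w)
  case (Cons l w)
  then show ?case
    using N.mult_base_shift[OF word_act_normal[OF assms(1)] _ assms(2)] N.mult_stable_shift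
    by (cases l) (simp_all add: letter_act_def)
qed simp

text \<open>Each letter acts injectively on normal forms (its inverse letter undoes it), hence so
  does each word; this lets us cancel \<open>w\<close> from \<open>w w' = 1\<close>.\<close>

lemma letter_act_inj:
  assumes p: "N.normal p" and q: "N.normal q" and eq: "letter_act l p = letter_act l q"
  shows "p = q"
proof (cases l)
  case (Gen ab)
  show ?thesis
  proof (cases "ab \<in> carrier (H \<times>\<times> H)")
    case True
    let ?ab' = "inv\<^bsub>H \<times>\<times> H\<^esub> ab"
    have cancel: "N.mult_base ?ab' (N.mult_base ab r) = r" if r: "N.normal r" for r
      unfolding N.mult_base_mult[OF r N.inv_closed[OF True] True] N.l_inv[OF True]
      by (rule N.mult_base_one[OF r])
    have "N.mult_base ab p = N.mult_base ab q" using eq Gen True by (simp add: letter_act_def)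
    then show ?thesis using cancel[OF p] cancel[OF q] by metis
  qed (use eq Gen in \<open>simp add: letter_act_def\<close>)
next
  case (Stable F e)
  have cancel: "N.mult_stable (F, \<not> e) (N.mult_stable (F, e) r) = r" if r: "N.normal r" for r
    using N.mult_stable_opp[OF r, of "(F, \<not> e)"] by (simp del: N.mult_stable.simps)
  show ?thesis
  proof (cases "F \<in> fg_abelian_subgroups H")
    case True
    then have "N.mult_stable (F, e) p = N.mult_stable (F, e) q" using eq Stable by (simp add: letter_act_def)
    then show ?thesis using cancel[OF p] cancel[OF q] by metis
  qed (use eq Stable in \<open>simp add: letter_act_def\<close>)
qed

lemma word_act_inj: "N.normal p \<Longrightarrow> N.normal q \<Longrightarrow> word_act w p = word_act w q \<Longrightarrow> p = q"
proof (induction w)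
  case (Cons l w)
  then show ?case
    using letter_act_inj[OF word_act_normal[OF Cons.prems(1)] word_act_normal[OF Cons.prems(2)]] by simp
qed simp

lemma A1_eq_word_act: "A1_eq H u v \<Longrightarrow> N.normal p \<Longrightarrow> word_act u p = word_act v p"
proof (induction arbitrary: p rule: A1_eq.induct)
  case (cong u w x y)
  then show ?case using word_act_normal by simp
next
  case unit
  then show ?case using N.mult_base_one by (simp add: letter_act_def)
next
  case (mult a b c d)
  then show ?case using N.mult_base_mult[of p "(a, b)" "(c, d)"] by (simp add: letter_act_def)
next
  case (stable_inv F e)
  then show ?case using N.mult_stable_opp[of p "(F, e)"] by (simp add: letter_act_def)
next
  case (hnn F f k)
  have fc: "f \<in> carrier H" and kc: "k \<in> carrier H"
    using hnn.hyps subgroup.mem_carrier[OF F_subgroup] subgroup.mem_carrier[OF C_subgroup] by auto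
  have a: "assoc_elt True (f, k) \<in> A1_S (F, True)"
    using hnn.hyps by (simp only: A1_S.simps) (rule imageI, simp)
  obtain L b where p: "p = (L, b)" by (cases p)
  show ?case
    using N.stable_conjugation[of "(F, True)", OF _ a hnn.prems[unfolded p]]
      A1_iso_assoc_elt[OF hnn.hyps, of True] fc kc hnn.hyps(1) p
    by (simp add: letter_act_def)
qed simp_all

text \<open>If \<open>w (g,1) w' = (h,1)\<close> with \<open>w w' = 1\<close>, then \<open>u = w \<cdot> 1\<close> is a normal form with
  \<open>(h,1) u = u (g,1)\<close>.\<close>

lemma conjugate_fixed_state:
  assumes g: "g \<in> carrier H" and h: "h \<in> carrier H"
    and conj: "A1_conjugate H (A1_incl H g) (A1_incl H h)"
  shows "\<exists>u. N.normal u \<and> N.mult_base (h, \<one>) u = N.shift (g, \<one>) u"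
proof -
  obtain w w' where ww': "A1_eq H (w @ w') []"
    and wgw': "A1_eq H (w @ [Gen (g, \<one>)] @ w') [Gen (h, \<one>)]"
    using conj by (auto simp: A1_conjugate_def A1_incl_def)
  define e :: "'a A1_state" where "e = ([], (\<one>, \<one>))"
  define u where "u = word_act w e"
  have e: "N.normal e" by (simp add: e_def N.normal_def)
  have u: "N.normal u" using word_act_normal[OF e] by (simp add: u_def)
  have "word_act w (word_act w' u) = word_act w e"
    using A1_eq_word_act[OF ww' u] by (simp add: u_def)
  then have w'u: "word_act w' u = e"
    using word_act_inj[OF word_act_normal[OF u] e] by blast
  have ge: "letter_act (Gen (g, \<one>)) e = N.shift (g, \<one>) e"
    using g by (simp add: e_def letter_act_def N.shift_def)
  have "N.mult_base (h, \<one>) u = word_act w (letter_act (Gen (g, \<one>)) (word_act w' u))"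
    using A1_eq_word_act[OF wgw' u] h by (simp add: letter_act_def)
  also have "\<dots> = N.shift (g, \<one>) u"
    using w'u ge word_act_shift[OF e, of "(g, \<one>)"] g by (simp add: u_def)
  finally show ?thesis using u by blast
qed

text \<open>Conversely such a normal form forces \<open>g\<close> and \<open>h\<close> to be conjugate in \<open>H\<close>: apply
  the key lemma with the class of pairs \<open>(z, 1)\<close>, \<open>z\<close> conjugate to \<open>h\<close>, which is stable under
  conjugation in \<open>H \<times>\<times> H\<close> and fixed by the isomorphisms.\<close>

lemma fixed_state_conjugate:
  assumes g: "g \<in> carrier H" and h: "h \<in> carrier H"
    and u: "N.normal u" and fixed: "N.mult_base (h, \<one>) u = N.shift (g, \<one>) u"
  shows "\<exists>x\<in>carrier H. x \<otimes> g \<otimes> inv x = h"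
proof -
  define Q where "Q z \<longleftrightarrow> snd z = \<one> \<and> fst z \<in> carrier H \<and> (\<exists>x\<in>carrier H. x \<otimes> fst z \<otimes> inv x = h)"
    for z :: "'a \<times> 'a"
  have Q_conj: "Q (inv\<^bsub>H \<times>\<times> H\<^esub> c \<otimes>\<^bsub>H \<times>\<times> H\<^esub> z \<otimes>\<^bsub>H \<times>\<times> H\<^esub> c)"
    if Qz: "Q z" and "z \<in> carrier (H \<times>\<times> H)" and cc: "c \<in> carrier (H \<times>\<times> H)" for z c
  proof -
    obtain z1 x where z: "z = (z1, \<one>)" "z1 \<in> carrier H" and x: "x \<in> carrier H" "x \<otimes> z1 \<otimes> inv x = h"
      using Qz by (auto simp: Q_def prod_eq_iff)
    obtain c1 c2 where c: "c = (c1, c2)" "c1 \<in> carrier H" "c2 \<in> carrier H" using cc by auto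
    have "z1 \<otimes> c1 = c1 \<otimes> (inv c1 \<otimes> z1 \<otimes> c1)" using z c by (simp add: m_assoc)
    then have "(x \<otimes> c1) \<otimes> (inv c1 \<otimes> z1 \<otimes> c1) \<otimes> inv (x \<otimes> c1) = h"
      using conjugate_trans[OF x(1) z(2) c(2) _ x(2)] z c by simp
    then show ?thesis using z c x by (auto simp: Q_def)
  qed
  have Q_iso: "Q (A1_iso i z)" if "Q z" for i z
    using that by (cases i; cases "snd i"; cases z) (simp_all add: Q_def)
  have "Q (h, \<one>)" using h by (auto simp: Q_def intro: bexI[of _ \<one>])
  moreover obtain L b where Lb: "u = (L, b)" by (cases u)
  ultimately obtain x' where x': "x' \<in> carrier (H \<times>\<times> H)" "Q x'" "x' \<otimes>\<^bsub>H \<times>\<times> H\<^esub> b = b \<otimes>\<^bsub>H \<times>\<times> H\<^esub> (g, \<one>)"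
    using N.fixed_point_conjugate[of Q L b "(h, \<one>)" "(g, \<one>)"] Q_conj Q_iso u fixed h
    by (auto simp: N.shift_def)
  obtain z1 x where z: "x' = (z1, \<one>)" "z1 \<in> carrier H" and x: "x \<in> carrier H" "x \<otimes> z1 \<otimes> inv x = h"
    using x'(2) by (auto simp: Q_def prod_eq_iff)
  obtain b1 b2 where b: "b = (b1, b2)" "b1 \<in> carrier H" using u Lb by (auto simp: N.normal_def)
  have "z1 \<otimes> b1 = b1 \<otimes> g" using x'(3) z b by simp
  then show ?thesis using conjugate_trans[OF x(1) z(2) b(2) g x(2)] x(1) b(2) by blast
qed

end

theorem lemma4p6:
  fixes H :: "('a, 'b) monoid_scheme"
  assumes "group H" and "g \<in> carrier H" and "h \<in> carrier H"
    and "A1_conjugate H (A1_incl H g) (A1_incl H h)"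
  shows "\<exists>x\<in>carrier H. x \<otimes>\<^bsub>H\<^esub> g \<otimes>\<^bsub>H\<^esub> inv\<^bsub>H\<^esub> x = h"
proof -
  interpret A1_hnn H by (rule A1_hnn.intro[OF assms(1)])
  obtain u where "N.normal u" "N.mult_base (h, \<one>\<^bsub>H\<^esub>) u = N.shift (g, \<one>\<^bsub>H\<^esub>) u"
    using conjugate_fixed_state[OF assms(2-4)] by blast
  then show ?thesis using fixed_state_conjugate[OF assms(2,3)] by blast
qed

end
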